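(* For any recurrent set $F\subset A^*$ and any integer $d\ge1$, there are only finitely many finite $F$-maximal bifix codes $X\subset F$ of $F$-degree $d$.
   Context: $A$ is a finite alphabet. $F$ is recurrent if it is nonempty, closed under factors, and for all $u,w\in F$ there is $v\in F$ with $uvw\in F$. A bifix code is a set of nonempty words none of which is a proper prefix or proper suffix of another; $X\subset F$ is $F$-maximal bifix if not properly contained in a bifix code contained in $F$. A parse of $w$ with respect to $X$ is a triple $(v,x,u)$ with $w=vxu$, $v$ having no suffix in $X$, $x\in X^*$, $u$ having no prefix in $X$; $\delta_X(w)$ is their number and the $F$-degree is $d_F(X)=\max_{w\in F}\delta_X(w)$. *)

theory Defs
  imports Main "HOL-Library.Sublist"
begin

text \<open>Words over a finite alphabet: lists over a type of class finite.
  Factors are contiguous sublists (library notion sublist).\<close>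

definition factorial :: "'a list set \<Rightarrow> bool" where
  "factorial F \<longleftrightarrow> (\<forall>w\<in>F. \<forall>u. sublist u w \<longrightarrow> u \<in> F)"

definition recurrent :: "'a list set \<Rightarrow> bool" where
  "recurrent F \<longleftrightarrow> F \<noteq> {} \<and> factorial F \<and>
     (\<forall>u\<in>F. \<forall>w\<in>F. \<exists>v\<in>F. u @ v @ w \<in> F)"

definition bifix_code :: "'a list set \<Rightarrow> bool" where
  "bifix_code X \<longleftrightarrow> [] \<notin> X \<and>
     (\<forall>x\<in>X. \<forall>y\<in>X. \<not> strict_prefix x y \<and> \<not> strict_suffix x y)"

definition F_maximal_bifix :: "'a list set \<Rightarrow> 'a list set \<Rightarrow> bool" where
  "F_maximal_bifix F X \<longleftrightarrow> bifix_code X \<and> X \<subseteq> F \<and>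
     \<not> (\<exists>Y. bifix_code Y \<and> Y \<subseteq> F \<and> X \<subset> Y)"

definition word_star :: "'a list set \<Rightarrow> 'a list set" where
  "word_star X = {concat xs | xs. set xs \<subseteq> X}"

definition parses :: "'a list set \<Rightarrow> 'a list \<Rightarrow> ('a list \<times> 'a list \<times> 'a list) set" where
  "parses X w = {(v, x, u). w = v @ x @ u \<and> \<not> (\<exists>s\<in>X. suffix s v)
      \<and> x \<in> word_star X \<and> \<not> (\<exists>p\<in>X. prefix p u)}"

definition delta :: "'a list set \<Rightarrow> 'a list \<Rightarrow> nat" where
  "delta X w = card (parses X w)"

definition has_F_degree :: "'a list set \<Rightarrow> 'a list set \<Rightarrow> nat \<Rightarrow> bool" where
  "has_F_degree F X d \<longleftrightarrow> (\<exists>w\<in>F. delta X w = d) \<and> (\<forall>w\<in>F. delta X w \<le> d)"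

end

theory Submission
  imports Defs
begin

(* The degree delta X w of a word w counts the suffixes of w having no prefix in X
   (a parse is determined by its last component); it is monotone on factors.  Key lemma:
   if X has F-degree d, every word of F of degree < d is shorter than some code word, so
   for a finite X only finitely many words of F have degree < d.  By induction on k we get
   a bound N_k, uniform over all finite codes of F-degree > k, on the length of the words
   of F of degree <= k: such words are determined by the code words of length <= N_{k-1} + 2,
   which leaves only finitely many possible sets of these words.  Finally every code word
   of a bifix code of F-degree d is at most two letters longer than a word of degree < d,
   so all codes in question are subsets of the finite set of words of length <= N_{d-1} + 2. *)

(* A suffix code: a set of nonempty words none of which is a proper suffix of another.
   Counting parses only uses this half of the bifix property. *)
definition suffix_code :: "'a list set \<Rightarrow> bool" where
  "suffix_code X \<longleftrightarrow> [] \<notin> X \<and> (\<forall>x\<in>X. \<forall>y\<in>X. suffix x y \<longrightarrow> x = y)"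

lemma bifix_code_imp_suffix_code: "bifix_code X \<Longrightarrow> suffix_code X"
  unfolding bifix_code_def suffix_code_def strict_suffix_def by blast

lemma suffix_code_cancel:
  assumes "suffix_code X" "q \<in> X" "q' \<in> X" "a @ q = b @ q'"
  shows "q = q'"
proof -
  have "suffix q (a @ q)" by (rule suffixI) (rule refl)
  moreover have "suffix q' (a @ q)" by (rule suffixI) (rule assms(4))
  ultimately have "suffix q q' \<or> suffix q' q" by (rule suffix_same_cases)
  then show ?thesis using assms(1-3) unfolding suffix_code_def by blast
qed

lemma word_star_Nil: "[] \<in> word_star X"
  unfolding word_star_def by (auto intro: exI[of _ "[]"])

lemma word_star_snoc: "x \<in> word_star X \<Longrightarrow> q \<in> X \<Longrightarrow> x @ q \<in> word_star X"
proof -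
  assume "x \<in> word_star X" "q \<in> X"
  then obtain xs where "x = concat xs" "set xs \<subseteq> X" unfolding word_star_def by auto
  with \<open>q \<in> X\<close> show ?thesis unfolding word_star_def by (intro CollectI exI[of _ "xs @ [q]"]) auto
qed

lemma word_star_snoc_cases:
  assumes "x \<in> word_star X" "x \<noteq> []"
  obtains x' q where "x = x' @ q" "x' \<in> word_star X" "q \<in> X"
proof -
  obtain xs where xs: "x = concat xs" "set xs \<subseteq> X"
    using assms(1) unfolding word_star_def by auto
  with assms(2) obtain ys q where "xs = ys @ [q]" by (metis concat.simps(1) rev_exhaust)
  with xs show ?thesis using that unfolding word_star_def by auto
qed

lemma left_factorization_exists:
  assumes "[] \<notin> X"
  shows "\<exists>v x. y = v @ x \<and> x \<in> word_star X \<and> \<not> (\<exists>s\<in>X. suffix s v)"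
proof (induction y rule: length_induct)
  case (1 y)
  show ?case
  proof (cases "\<exists>s\<in>X. suffix s y")
    case False
    then show ?thesis using word_star_Nil by (metis append_Nil2)
  next
    case True
    then obtain s y' where s: "s \<in> X" "y = y' @ s" by (auto simp: suffix_def)
    with assms have "length y' < length y" by (cases s) auto
    with "1.IH" obtain v x where "y' = v @ x" "x \<in> word_star X" "\<not> (\<exists>s\<in>X. suffix s v)"
      by blast
    with s have "y = v @ (x @ s)" "x @ s \<in> word_star X" by (simp_all add: word_star_snoc)
    with \<open>\<not> (\<exists>s\<in>X. suffix s v)\<close> show ?thesis by blast
  qed
qed

(* For a suffix code this factorization is unique: peel off the (unique) last code word. *)
lemma left_factorization_unique:
  assumes "suffix_code X"
    and "v @ x = v' @ x'" "x \<in> word_star X" "x' \<in> word_star X"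
    and "\<not> (\<exists>s\<in>X. suffix s v)" "\<not> (\<exists>s\<in>X. suffix s v')"
  shows "v = v' \<and> x = x'"
  using assms(2-4)
proof (induction x arbitrary: x' rule: length_induct)
  case (1 x)
  have ends_in_X: "\<exists>s\<in>X. suffix s (u @ z)" if z: "z \<in> word_star X" "z \<noteq> []" for u z
  proof -
    obtain z' q where "z = z' @ q" "q \<in> X" by (rule word_star_snoc_cases[OF z])
    then show ?thesis by (intro bexI[of _ q] suffixI[of _ "u @ z'"]) simp_all
  qed
  show ?case
  proof (cases "x = [] \<or> x' = []")
    case True
    then have "x = [] \<and> x' = []"
    proof
      assume "x = []"
      then have "v = v' @ x'" using "1.prems"(1) by simp
      then show ?thesis using ends_in_X[of x' v'] \<open>x = []\<close> assms(5) "1.prems"(3) by auto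
    next
      assume "x' = []"
      then have "v' = v @ x" using "1.prems"(1) by simp
      then show ?thesis using ends_in_X[of x v] \<open>x' = []\<close> assms(6) "1.prems"(2) by auto
    qed
    with "1.prems" show ?thesis by simp
  next
    case False
    then have "x \<noteq> []" "x' \<noteq> []" by simp_all
    obtain y q where yq: "x = y @ q" "y \<in> word_star X" "q \<in> X"
      by (rule word_star_snoc_cases[OF "1.prems"(2) \<open>x \<noteq> []\<close>])
    obtain y' q' where yq': "x' = y' @ q'" "y' \<in> word_star X" "q' \<in> X"
      by (rule word_star_snoc_cases[OF "1.prems"(3) \<open>x' \<noteq> []\<close>])
    have "(v @ y) @ q = (v' @ y') @ q'" using "1.prems"(1) yq yq' by simp
    then have "q = q'" using suffix_code_cancel[OF assms(1) yq(3) yq'(3)] by blast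
    with yq yq' "1.prems"(1) have "v @ y = v' @ y'" by simp
    moreover have "length y < length x"
      using yq assms(1) unfolding suffix_code_def by (cases q) auto
    ultimately have "v = v' \<and> y = y'" using "1.IH" yq(2) yq'(2) by blast
    with yq yq' \<open>q = q'\<close> show ?thesis by simp
  qed
qed

(* The suffixes of w having no prefix in X.  Their number is the degree delta X w. *)
definition avoiding_suffixes :: "'a list set \<Rightarrow> 'a list \<Rightarrow> 'a list set" where
  "avoiding_suffixes X w = {u. suffix u w \<and> \<not> (\<exists>p\<in>X. prefix p u)}"

lemma finite_avoiding_suffixes: "finite (avoiding_suffixes X w)"
  by (rule finite_subset[of _ "set (suffixes w)"]) (auto simp: avoiding_suffixes_def)

(* A parse (v, x, u) of w is determined by its last component u, and every suffix u of w
   without prefix in X occurs: delta X w counts the suffixes of w avoiding X. *)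
lemma delta_eq_card_avoiding_suffixes:
  assumes code: "suffix_code X"
  shows "delta X w = card (avoiding_suffixes X w)"
proof -
  have nil: "[] \<notin> X" using code by (simp add: suffix_code_def)
  have "bij_betw (\<lambda>(v, x, u). u) (parses X w) (avoiding_suffixes X w)"
  proof (rule bij_betwI')
    fix a b assume "a \<in> parses X w" "b \<in> parses X w"
    then obtain v x u v' x' u' where ab: "a = (v, x, u)" "b = (v', x', u')"
      and p: "w = v @ x @ u" "x \<in> word_star X" "\<not> (\<exists>s\<in>X. suffix s v)"
             "w = v' @ x' @ u'" "x' \<in> word_star X" "\<not> (\<exists>s\<in>X. suffix s v')"
      unfolding parses_def by auto
    show "((\<lambda>(v, x, u). u) a = (\<lambda>(v, x, u). u) b) = (a = b)"
    proof
      assume "(\<lambda>(v, x, u). u) a = (\<lambda>(v, x, u). u) b"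
      with ab p have "u = u'" "v @ x = v' @ x'" by simp_all
      with left_factorization_unique[OF code _ p(2,5,3,6)] ab show "a = b" by simp
    qed simp
  next
    fix a assume "a \<in> parses X w"
    then show "(\<lambda>(v, x, u). u) a \<in> avoiding_suffixes X w"
      unfolding parses_def avoiding_suffixes_def by (auto simp: suffix_def)
  next
    fix u assume "u \<in> avoiding_suffixes X w"
    then obtain y where y: "w = y @ u" "\<not> (\<exists>p\<in>X. prefix p u)"
      unfolding avoiding_suffixes_def suffix_def by auto
    obtain v x where "y = v @ x" "x \<in> word_star X" "\<not> (\<exists>s\<in>X. suffix s v)"
      using left_factorization_exists[OF nil] by blast
    with y show "\<exists>a\<in>parses X w. u = (\<lambda>(v, x, u). u) a"
      by (intro bexI[of _ "(v, x, u)"]) (auto simp: parses_def)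
  qed
  then show ?thesis unfolding delta_def by (rule bij_betw_same_card)
qed

lemma Nil_avoiding_suffixes: "[] \<notin> X \<Longrightarrow> [] \<in> avoiding_suffixes X w"
  by (auto simp: avoiding_suffixes_def)

(* The empty suffix always avoids X, so every word has at least one parse. *)
lemma delta_pos: "suffix_code X \<Longrightarrow> 0 < delta X w"
  using Nil_avoiding_suffixes[of X w] finite_avoiding_suffixes[of X w]
  by (auto simp: delta_eq_card_avoiding_suffixes suffix_code_def card_gt_0_iff)

lemma avoiding_suffixes_append_left: "avoiding_suffixes X w \<subseteq> avoiding_suffixes X (a @ w)"
  unfolding avoiding_suffixes_def by (auto intro: suffix_appendI)

(* Appending a letter c does not decrease the count: u \<mapsto> u c, or u \<mapsto> [] when u c \<in> X;
   the latter case occurs for at most one u since X is a suffix code. *)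
lemma card_avoiding_suffixes_snoc:
  assumes code: "suffix_code X"
  shows "card (avoiding_suffixes X w) \<le> card (avoiding_suffixes X (w @ [c]))"
proof -
  define f where "f u = (if u @ [c] \<in> X then [] else u @ [c])" for u
  have "inj_on f (avoiding_suffixes X w)"
  proof (rule inj_onI)
    fix u u' assume u: "u \<in> avoiding_suffixes X w" and u': "u' \<in> avoiding_suffixes X w"
      and "f u = f u'"
    show "u = u'"
    proof (cases "u @ [c] \<in> X \<and> u' @ [c] \<in> X")
      case True
      have "suffix u u' \<or> suffix u' u"
        using u u' suffix_same_cases unfolding avoiding_suffixes_def by blast
      then have "suffix (u @ [c]) (u' @ [c]) \<or> suffix (u' @ [c]) (u @ [c])" by simp
      with True code show ?thesis unfolding suffix_code_def by blast
    next
      case False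
      with \<open>f u = f u'\<close> show ?thesis unfolding f_def by (auto split: if_splits)
    qed
  qed
  moreover have "f ` avoiding_suffixes X w \<subseteq> avoiding_suffixes X (w @ [c])"
  proof
    fix v assume "v \<in> f ` avoiding_suffixes X w"
    then obtain u where u: "suffix u w" "\<not> (\<exists>p\<in>X. prefix p u)" and v: "v = f u"
      unfolding avoiding_suffixes_def by auto
    have "\<not> (\<exists>p\<in>X. prefix p (u @ [c]))" if "u @ [c] \<notin> X"
      using u(2) that by (auto simp: prefix_snoc)
    with u code show "v \<in> avoiding_suffixes X (w @ [c])"
      unfolding v f_def avoiding_suffixes_def suffix_code_def by auto
  qed
  ultimately show ?thesis
    by (intro card_inj_on_le finite_avoiding_suffixes)
qed

lemma delta_sublist_mono:
  assumes code: "suffix_code X" and "sublist w' w"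
  shows "delta X w' \<le> delta X w"
proof -
  obtain a b where w: "w = a @ w' @ b" using assms(2) by (auto simp: sublist_def)
  have "card (avoiding_suffixes X w') \<le> card (avoiding_suffixes X (w' @ b))"
  proof (induction b rule: rev_induct)
    case (snoc c b)
    then show ?case using card_avoiding_suffixes_snoc[OF code, of "w' @ b" c] by simp
  qed simp
  also have "\<dots> \<le> card (avoiding_suffixes X (a @ w' @ b))"
    by (intro card_mono finite_avoiding_suffixes avoiding_suffixes_append_left)
  finally show ?thesis using w by (simp add: delta_eq_card_avoiding_suffixes[OF code])
qed

(* If c r avoids X and is a suffix of w, the avoiding suffixes of r are those of w shorter
   than c r, so r has strictly fewer of them. *)
lemma card_avoiding_suffixes_tl:
  assumes "c # r \<in> avoiding_suffixes X w"
  shows "card (avoiding_suffixes X r) < card (avoiding_suffixes X w)"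
proof -
  have "avoiding_suffixes X r \<subseteq> avoiding_suffixes X w - {c # r}"
    using assms unfolding avoiding_suffixes_def
    by (auto dest: suffix_length_le intro: suffix_order.trans suffix_ConsI)
  then have "card (avoiding_suffixes X r) \<le> card (avoiding_suffixes X w - {c # r})"
    by (intro card_mono) (simp_all add: finite_avoiding_suffixes)
  also have "\<dots> < card (avoiding_suffixes X w)"
    by (rule card_Diff1_less[OF finite_avoiding_suffixes assms])
  finally show ?thesis .
qed

lemma factorial_sublist: "factorial F \<Longrightarrow> w \<in> F \<Longrightarrow> sublist u w \<Longrightarrow> u \<in> F"
  unfolding factorial_def by blast

lemma delta_le_degree: "has_F_degree F X d \<Longrightarrow> w \<in> F \<Longrightarrow> delta X w \<le> d"
  unfolding has_F_degree_def by blast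

lemma avoiding_suffixes_saturated:
  assumes code: "suffix_code X" and deg: "has_F_degree F X d"
    and w0: "delta X w0 = d" and z: "z \<in> F" "suffix w0 z"
  shows "avoiding_suffixes X z = avoiding_suffixes X w0"
proof -
  obtain a where "z = a @ w0" using z(2) by (auto simp: suffix_def)
  then have sub: "avoiding_suffixes X w0 \<subseteq> avoiding_suffixes X z"
    by (simp add: avoiding_suffixes_append_left)
  have "card (avoiding_suffixes X z) \<le> card (avoiding_suffixes X w0)"
    using delta_le_degree[OF deg z(1)] w0 by (simp add: delta_eq_card_avoiding_suffixes[OF code])
  with card_mono[OF finite_avoiding_suffixes sub]
  have "card (avoiding_suffixes X w0) = card (avoiding_suffixes X z)" by (rule le_antisym)
  then show ?thesis by (rule card_subset_eq[OF finite_avoiding_suffixes sub, symmetric])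
qed

(* Put w behind a word w0 of degree d; some avoiding suffix s of w0 v w is longer than w.
   Then put w0 behind again: s v' w0 cannot avoid X by saturation, so a code word is a
   prefix of s v' w0 without being a prefix of s, hence it is longer than s. *)
lemma shorter_than_some_code_word:
  assumes rec: "recurrent F" and code: "suffix_code X" and deg: "has_F_degree F X d"
    and w: "w \<in> F" "delta X w < d"
  shows "\<exists>q\<in>X. length w < length q"
proof -
  obtain w0 where w0: "w0 \<in> F" "delta X w0 = d" using deg unfolding has_F_degree_def by auto
  obtain v where pF: "w0 @ v @ w \<in> F" using rec w0(1) w unfolding recurrent_def by blast
  define p where "p = w0 @ v @ w"
  have "delta X w0 \<le> delta X p"
    unfolding p_def by (intro delta_sublist_mono[OF code] prefix_imp_sublist) simp
  then have "card (avoiding_suffixes X w) < card (avoiding_suffixes X p)"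
    using w(2) w0(2) by (simp add: delta_eq_card_avoiding_suffixes[OF code])
  then have "\<not> avoiding_suffixes X p \<subseteq> avoiding_suffixes X w"
    by (meson card_mono finite_avoiding_suffixes not_le)
  then obtain s where s: "s \<in> avoiding_suffixes X p" "s \<notin> avoiding_suffixes X w"
    by blast
  have s_avoids: "\<not> (\<exists>q\<in>X. prefix q s)" using s(1) unfolding avoiding_suffixes_def by auto
  have "suffix s p" using s(1) by (simp add: avoiding_suffixes_def)
  moreover have "suffix w p" unfolding p_def by (rule suffixI[of _ "w0 @ v"]) simp
  moreover have "\<not> suffix s w" using s s_avoids by (simp add: avoiding_suffixes_def)
  ultimately have len_s: "length w < length s" using suffix_length_suffix[of s p w] by linarith
  obtain v' where z: "p @ v' @ w0 \<in> F" using rec pF w0(1) unfolding recurrent_def p_def by blast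
  have sat: "avoiding_suffixes X (p @ v' @ w0) = avoiding_suffixes X w0"
    by (rule avoiding_suffixes_saturated[OF code deg w0(2) z]) (rule suffixI[of _ "p @ v'"], simp)
  have "\<exists>q\<in>X. prefix q (s @ v' @ w0)"
  proof (rule ccontr)
    assume "\<not> ?thesis"
    moreover have "suffix (s @ v' @ w0) (p @ v' @ w0)"
      using \<open>suffix s p\<close> by simp
    ultimately have "s @ v' @ w0 \<in> avoiding_suffixes X w0"
      using sat unfolding avoiding_suffixes_def by auto
    then show False
      using len_s unfolding avoiding_suffixes_def by (auto dest!: suffix_length_le)
  qed
  then obtain q where q: "q \<in> X" "prefix q (s @ v' @ w0)" by blast
  have "length s < length q"
  proof (rule ccontr)
    assume "\<not> length s < length q"
    then have "prefix q s" using prefix_length_prefix[OF q(2), of s] by simp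
    with s_avoids q(1) show False by blast
  qed
  with q(1) len_s show ?thesis by (intro bexI[of _ q]) auto
qed

lemma finite_length_le: "finite {w :: ('a::finite) list. length w \<le> n}"
  using finite_lists_length_le[of "UNIV :: 'a set" n] by simp

lemma finite_low_delta_words:
  fixes F :: "('a::finite) list set"
  assumes "recurrent F" "suffix_code X" "finite X" "has_F_degree F X d" "k < d"
  shows "finite {w \<in> F. delta X w \<le> k}"
proof (rule finite_subset)
  show "{w \<in> F. delta X w \<le> k} \<subseteq> {w. length w \<le> Max (length ` X)}"
  proof
    fix w assume "w \<in> {w \<in> F. delta X w \<le> k}"
    then have "w \<in> F" "delta X w < d" using assms(5) by auto
    then obtain q where "q \<in> X" "length w < length q"
      using shorter_than_some_code_word[OF assms(1,2,4)] by blast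
    moreover have "length q \<le> Max (length ` X)" by (rule Max_ge) (simp_all add: assms(3) \<open>q \<in> X\<close>)
    ultimately show "w \<in> {w. length w \<le> Max (length ` X)}" by simp
  qed
  show "finite {w::'a list. length w \<le> Max (length ` X)}"
    by (rule finite_length_le)
qed

definition windows_covered :: "'a list set \<Rightarrow> nat \<Rightarrow> 'a list \<Rightarrow> bool" where
  "windows_covered S M w \<longleftrightarrow>
     (\<forall>w'. sublist w' w \<longrightarrow> length w' = Suc M \<longrightarrow> (\<exists>q\<in>S. prefix q w'))"

(* The words of F that are described by the finite data S, M, k alone. *)
definition window_words :: "'a list set \<Rightarrow> 'a list set \<Rightarrow> nat \<Rightarrow> nat \<Rightarrow> 'a list set" where
  "window_words F S M k = {w \<in> F. windows_covered S M w \<and>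
     card {u \<in> avoiding_suffixes S w. length u \<le> M} \<le> k}"

lemma short_avoiding_suffixes_truncate:
  "{u \<in> avoiding_suffixes (X \<inter> {q. length q \<le> Suc M}) w. length u \<le> M}
     = {u \<in> avoiding_suffixes X w. length u \<le> M}"
proof -
  have "(\<exists>p\<in>X \<inter> {q. length q \<le> Suc M}. prefix p u) \<longleftrightarrow> (\<exists>p\<in>X. prefix p u)"
    if "length u \<le> M" for u
    using prefix_length_le that by fastforce
  then show ?thesis unfolding avoiding_suffixes_def by auto
qed

lemma windows_covered_avoiding_short:
  assumes "windows_covered S M w" "S \<subseteq> X" "r \<in> avoiding_suffixes X w"
  shows "length r \<le> M"
proof (rule ccontr)
  assume "\<not> length r \<le> M"
  then have "length (take (Suc M) r) = Suc M" by simp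
  moreover have "suffix r w" using assms(3) unfolding avoiding_suffixes_def by simp
  then have "sublist (take (Suc M) r) w"
    by (rule sublist_order.order.trans[OF prefix_imp_sublist[OF take_is_prefix] suffix_imp_sublist])
  ultimately obtain q where "q \<in> X" "prefix q (take (Suc M) r)"
    using assms(1,2) unfolding windows_covered_def by blast
  then show False
    using assms(3) take_is_prefix prefix_order.trans unfolding avoiding_suffixes_def by blast
qed

(* Conversely, if avoiding suffixes of words of degree \<le> k are short, the windows of such
   words are covered by short code words (degree only decreases on factors). *)
lemma windows_covered_of_short:
  assumes code: "suffix_code X" and fac: "factorial F"
    and short: "\<forall>w\<in>F. delta X w \<le> k \<longrightarrow> (\<forall>r\<in>avoiding_suffixes X w. length r \<le> M)"
    and w: "w \<in> F" "delta X w \<le> k"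
  shows "windows_covered (X \<inter> {q. length q \<le> Suc M}) M w"
  unfolding windows_covered_def
proof (intro allI impI)
  fix w' assume w': "sublist w' w" "length w' = Suc M"
  have "w' \<in> F" using factorial_sublist[OF fac w(1) w'(1)] .
  moreover have "delta X w' \<le> k" using delta_sublist_mono[OF code w'(1)] w(2) by simp
  ultimately have "w' \<notin> avoiding_suffixes X w'" using short w'(2) by fastforce
  then obtain q where "q \<in> X" "prefix q w'" unfolding avoiding_suffixes_def by auto
  moreover have "length q \<le> Suc M" using prefix_length_le[OF \<open>prefix q w'\<close>] w'(2) by simp
  ultimately show "\<exists>q\<in>X \<inter> {q. length q \<le> Suc M}. prefix q w'" by blast
qed

lemma low_delta_words_eq_window_words:
  assumes code: "suffix_code X" and fac: "factorial F"
    and short: "\<forall>w\<in>F. delta X w \<le> k \<longrightarrow> (\<forall>r\<in>avoiding_suffixes X w. length r \<le> M)"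
  shows "{w \<in> F. delta X w \<le> k} = window_words F (X \<inter> {q. length q \<le> Suc M}) M k"
    (is "_ = window_words F ?S M k")
proof (intro equalityI subsetI)
  fix w assume "w \<in> {w \<in> F. delta X w \<le> k}"
  then have w: "w \<in> F" "delta X w \<le> k" by auto
  then have "{u \<in> avoiding_suffixes ?S w. length u \<le> M} = avoiding_suffixes X w"
    using short unfolding short_avoiding_suffixes_truncate by auto
  with w windows_covered_of_short[OF code fac short w] show "w \<in> window_words F ?S M k"
    unfolding window_words_def by (simp add: delta_eq_card_avoiding_suffixes[OF code])
next
  fix w assume "w \<in> window_words F ?S M k"
  then have w: "w \<in> F" "windows_covered ?S M w" "card {u \<in> avoiding_suffixes ?S w. length u \<le> M} \<le> k"
    unfolding window_words_def by auto
  have "{u \<in> avoiding_suffixes ?S w. length u \<le> M} = avoiding_suffixes X w"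
    using windows_covered_avoiding_short[OF w(2)] unfolding short_avoiding_suffixes_truncate by auto
  with w show "w \<in> {w \<in> F. delta X w \<le> k}"
    by (simp add: delta_eq_card_avoiding_suffixes[OF code])
qed

definition delta_length_bound :: "'a list set \<Rightarrow> nat \<Rightarrow> nat \<Rightarrow> bool" where
  "delta_length_bound F k N \<longleftrightarrow>
     (\<forall>X d. suffix_code X \<longrightarrow> finite X \<longrightarrow> has_F_degree F X d \<longrightarrow> k < d \<longrightarrow>
        (\<forall>w\<in>F. delta X w \<le> k \<longrightarrow> length w \<le> N))"

(* No word has degree 0. *)
lemma delta_length_bound_0: "delta_length_bound F 0 0"
  unfolding delta_length_bound_def
proof (intro allI impI ballI)
  fix X d w assume "suffix_code X" "delta X w \<le> 0"
  with delta_pos[of X w] show "length w \<le> 0" by simp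
qed

(* Dropping the first letter of an avoiding suffix lowers the degree, so a bound for degree k
   bounds the avoiding suffixes of words of degree k + 1. *)
lemma avoiding_suffixes_length_le:
  assumes bound: "delta_length_bound F k N" and fac: "factorial F"
    and X: "suffix_code X" "finite X" "has_F_degree F X d" "Suc k < d"
    and w: "w \<in> F" "delta X w \<le> Suc k" and r: "r \<in> avoiding_suffixes X w"
  shows "length r \<le> Suc N"
proof (cases r)
  case (Cons c r')
  have "card (avoiding_suffixes X r') < card (avoiding_suffixes X w)"
    using card_avoiding_suffixes_tl[of c r' X w] r Cons by simp
  then have "delta X r' \<le> k" using w(2) by (simp add: delta_eq_card_avoiding_suffixes[OF X(1)])
  moreover have "suffix (c # r') w" using r Cons by (simp add: avoiding_suffixes_def)
  then have "sublist r' w" by (rule suffix_imp_sublist[OF suffix_ConsD])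
  then have "r' \<in> F" by (rule factorial_sublist[OF fac w(1)])
  ultimately have "length r' \<le> N"
    using bound X unfolding delta_length_bound_def by auto
  then show ?thesis using Cons by simp
qed simp

(* Induction step: the words of degree \<le> k + 1 are window words for one of the finitely many
   sets S of words of length \<le> M + 1; only finite window sets occur, and the longest word
   in their union is a uniform bound. *)
lemma delta_length_bound_Suc:
  fixes F :: "('a::finite) list set"
  assumes rec: "recurrent F" and bound: "delta_length_bound F k N"
  obtains N' where "delta_length_bound F (Suc k) N'"
proof -
  define M where "M = Suc N"
  define B where "B = {q :: 'a list. length q \<le> Suc M}"
  define G where "G = \<Union>{window_words F S M (Suc k) | S. S \<subseteq> B \<and> finite (window_words F S M (Suc k))}"
  have fac: "factorial F" using rec unfolding recurrent_def by blast
  have "{window_words F S M (Suc k) | S. S \<subseteq> B \<and> finite (window_words F S M (Suc k))}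
      \<subseteq> (\<lambda>S. window_words F S M (Suc k)) ` Pow B" by blast
  moreover have "finite B" unfolding B_def by (rule finite_length_le)
  ultimately have "finite {window_words F S M (Suc k) | S. S \<subseteq> B
      \<and> finite (window_words F S M (Suc k))}" by (simp add: finite_subset)
  then have "finite G" unfolding G_def by (rule finite_Union) auto
  have "delta_length_bound F (Suc k) (Max (insert 0 (length ` G)))"
    unfolding delta_length_bound_def
  proof (intro allI impI ballI)
    fix X d w assume X: "suffix_code X" "finite X" "has_F_degree F X d" "Suc k < d"
      and w: "w \<in> F" "delta X w \<le> Suc k"
    have "\<forall>w\<in>F. delta X w \<le> Suc k \<longrightarrow> (\<forall>r\<in>avoiding_suffixes X w. length r \<le> M)"
      using avoiding_suffixes_length_le[OF bound fac X] unfolding M_def by blast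
    then have eq: "{w \<in> F. delta X w \<le> Suc k} = window_words F (X \<inter> B) M (Suc k)"
      unfolding B_def by (rule low_delta_words_eq_window_words[OF X(1) fac])
    moreover have "finite {w \<in> F. delta X w \<le> Suc k}"
      by (rule finite_low_delta_words[OF rec X])
    ultimately have "window_words F (X \<inter> B) M (Suc k)
        \<in> {window_words F S M (Suc k) | S. S \<subseteq> B \<and> finite (window_words F S M (Suc k))}"
      by (intro CollectI exI[of _ "X \<inter> B"]) simp
    moreover have "w \<in> window_words F (X \<inter> B) M (Suc k)" using w eq by blast
    ultimately have "w \<in> G" unfolding G_def by (rule UnionI)
    with \<open>finite G\<close> show "length w \<le> Max (insert 0 (length ` G))" by simp
  qed
  then show ?thesis by (rule that)
qed

lemma delta_length_bound_exists:
  fixes F :: "('a::finite) list set"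
  assumes "recurrent F"
  shows "\<exists>N. delta_length_bound F k N"
proof (induction k)
  case 0
  show ?case using delta_length_bound_0 by blast
next
  case (Suc k)
  then show ?case using delta_length_bound_Suc[OF assms] by metis
qed

(* Every code word x = c y' e of a bifix code of F-degree d has degree(y') < d, because c y'
   is an avoiding suffix of itself (X is a prefix code); so x is at most two letters longer
   than the words of degree below d. *)
lemma code_word_length_le:
  assumes code: "bifix_code X" and XF: "X \<subseteq> F" and fac: "factorial F"
    and deg: "has_F_degree F X d"
    and bound: "\<And>w. w \<in> F \<Longrightarrow> delta X w < d \<Longrightarrow> length w \<le> N"
    and x: "x \<in> X"
  shows "length x \<le> N + 2"
proof -
  have "x \<noteq> []" using code x by (auto simp: bifix_code_def)
  then obtain y e where xy: "x = y @ [e]" by (cases x rule: rev_cases) auto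
  have "strict_prefix y x" unfolding xy by (simp add: strict_prefix_def)
  have "sublist y x" unfolding xy by (rule prefix_imp_sublist) simp
  then have yF: "y \<in> F" using factorial_sublist[OF fac] XF x by blast
  show ?thesis
  proof (cases y)
    case (Cons c y')
    have "\<not> (\<exists>q\<in>X. prefix q y)"
      using code x \<open>strict_prefix y x\<close> unfolding bifix_code_def
      by (meson prefix_order.le_less_trans)
    then have "c # y' \<in> avoiding_suffixes X y" using Cons by (simp add: avoiding_suffixes_def)
    then have "card (avoiding_suffixes X y') < card (avoiding_suffixes X y)"
      by (rule card_avoiding_suffixes_tl)
    then have "delta X y' < d"
      using delta_le_degree[OF deg yF] bifix_code_imp_suffix_code[OF code]
      by (simp add: delta_eq_card_avoiding_suffixes)
    moreover have "suffix y' y" using Cons suffix_tl[of y] by simp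
    then have "y' \<in> F" by (rule factorial_sublist[OF fac yF suffix_imp_sublist])
    ultimately have "length y' \<le> N" using bound by blast
    then show ?thesis using xy Cons by simp
  qed (simp add: xy)
qed

theorem mainTheorem9:
  fixes F :: "('a::finite) list set" and d :: nat
  assumes "recurrent F" and "d \<ge> 1"
  shows "finite {X. X \<subseteq> F \<and> finite X \<and> F_maximal_bifix F X \<and> has_F_degree F X d}"
proof -
  obtain N where N: "delta_length_bound F (d - 1) N"
    using delta_length_bound_exists[OF assms(1)] by blast
  have fac: "factorial F" using assms(1) unfolding recurrent_def by blast
  have "{X. X \<subseteq> F \<and> finite X \<and> F_maximal_bifix F X \<and> has_F_degree F X d}
      \<subseteq> Pow {x. length x \<le> N + 2}"
  proof (rule subsetI, rule PowI)
    fix X assume "X \<in> {X. X \<subseteq> F \<and> finite X \<and> F_maximal_bifix F X \<and> has_F_degree F X d}"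
    then have X: "bifix_code X" "X \<subseteq> F" "finite X" "has_F_degree F X d"
      unfolding F_maximal_bifix_def by auto
    have "length w \<le> N" if "w \<in> F" "delta X w < d" for w
    proof -
      have "d - 1 < d" "delta X w \<le> d - 1" using assms(2) that(2) by simp_all
      with N X(3,4) bifix_code_imp_suffix_code[OF X(1)] \<open>w \<in> F\<close> show ?thesis
        unfolding delta_length_bound_def by blast
    qed
    with code_word_length_le[OF X(1,2) fac X(4)] show "X \<subseteq> {x. length x \<le> N + 2}" by blast
  qed
  moreover have "finite (Pow {x :: 'a list. length x \<le> N + 2})" by (simp add: finite_length_le)
  ultimately show ?thesis by (rule finite_subset)
qed

end
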